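(* Consider the iterates of AS-ALM and fix $k\ge0$ with $\eta_k\in(0,1/\nu)$. Let $\tilde\lambda^k=\lambda^k-\beta(Ax^{k+1}-b)$. Then for all $x\in\mathcal X$, $$f(x)-f(x^{k+1})+\langle x-x^{k+1},-A^\top\tilde\lambda^k\rangle\ge\langle x^{k+1}-x,\mathcal D_k(x^{k+1}-x^k)\rangle+\zeta^k(x).$$
   Context: Setting. $\mathcal X\subset\mathbb R^{n_1}$ is a nonempty closed convex set; $A\in\mathbb R^{n\times n_1}$, $b\in\mathbb R^n$; $f=\frac1N\sum_{j=1}^Nf_j$, each $f_j$ real-valued, convex and continuously differentiable on an open set containing $\mathcal X$. The problem is $\min\{f(x):Ax=b,\ x\in\mathcal X\}$. A fixed symmetric positive definite $H$ and a constant $\nu>0$ satisfy $\|\nabla f_j(x_1)-\nabla f_j(x_2)\|_{H^{-1}}\le\nu\|x_1-x_2\|_H$ for all $x_1,x_2\in\mathcal X$ and all $j$. For symmetric $G$, $\|v\|_G^2:=v^\top Gv$; $G_1\succeq G_2$ means $G_1-G_2$ is positive semidefinite. Subroutine xsub. Inputs: $x^k\in\mathcal X$, $\breve x^k$, $h\in\mathbb R^{n_1}$, an integer $m_k\ge1$, $\eta_k>0$, a symmetric matrix $M_k$. Set $x_1=x^k$, $\breve x_1=\breve x^k$. For $t=1,\dots,m_k$: draw $\xi_t$ uniformly from $\{1,\dots,N\}$, independently of everything generated before; set $\beta_t=2/(t+1)$, $\gamma_t=2/(t\eta_k)$, $\hat x_t=\beta_t\breve x_t+(1-\beta_t)x_t$,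 $d_t=\nabla f_{\xi_t}(\hat x_t)+e_t$ where $e_t$ is a random vector whose conditional expectation given all previously generated random quantities and $\xi_t$ is $0$; $\breve x_{t+1}=\arg\min_{x\in\mathcal X}\{\langle d_t+h,x\rangle+\frac{\gamma_t}2\|x-\breve x_t\|_H^2+\frac12\|x-x^k\|_{M_k}^2\}$; $x_{t+1}=\beta_t\breve x_{t+1}+(1-\beta_t)x_t$. Output $x^{k+1}=x_{m_k+1}$, $\breve x^{k+1}=\breve x_{m_k+1}$. Put $\delta_t=\nabla f(\hat x_t)-d_t$ (inner quantities of outer iteration $k$), and for $x\in\mathcal X$ $$\zeta^k(x)=\frac{2}{m_k(m_k+1)}\Big[\frac1{\eta_k}\big(\|x-\breve x^{k+1}\|_H^2-\|x-\breve x^k\|_H^2\big)-\sum_{t=1}^{m_k}t\langle\delta_t,\breve x_t-x\rangle-\frac{\eta_k}{4(1-\eta_k\nu)}\sum_{t=1}^{m_k}t^2\|\delta_t\|_{H^{-1}}^2\Big].$$ Algorithm AS-ALM. Parameters: $\beta>0$, $s\in(0,2]$, the matrix $H$. Start: $(x^0,\lambda^0)\in\mathcal X\times\mathbb R^n$, $\breve x^0=x^0$. For $k=0,1,\dots$: choose an integer $m_k\ge1$, $\eta_k>0$ and a symmetric $M_k$ with $\mathcal D_k:=M_k-\beta A^\top A\succeq0$; set $h^k=-A^\top[\lambda^k-\beta(Ax^k-b)]$; compute $(x^{k+1},\breve x^{k+1})$ by xsub with inputs $x^k,\breve x^k,h^k,m_k,\eta_k,M_k$; $\lambda^{k+1}=\lambda^k-s\beta(Ax^{k+1}-b)$.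 *)

theory Defs
  imports "HOL-Analysis.Analysis"
begin

definition qf :: "real^'n^'n \<Rightarrow> real^'n \<Rightarrow> real" where
  "qf G v = v \<bullet> (G *v v)"

definition Gnorm :: "real^'n^'n \<Rightarrow> real^'n \<Rightarrow> real" where
  "Gnorm G v = sqrt (qf G v)"

definition psd :: "real^'n^'n \<Rightarrow> bool" where
  "psd G \<longleftrightarrow> (\<forall>v. 0 \<le> qf G v)"

definition pos_def :: "real^'n^'n \<Rightarrow> bool" where
  "pos_def G \<longleftrightarrow> (\<forall>v. v \<noteq> 0 \<longrightarrow> 0 < qf G v)"

end

theory Submission
  imports Defs
begin

text \<open>Within outer iteration k the subroutine is an accelerated stochastic approximation scheme
  for f plus the linearized augmented Lagrangian with proximal term
  psi(z) = <h, z> + |z - x^k|^2_M / 2. For the potential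
  gap_t = (f + psi)(x_t) - (f + psi)(y) + |y - x_t|^2_M / 2, smoothness of f at x-hat_t, convexity
  of f and psi and the three-point property of the proximal step give
  t(t+1) gap_(t+1) <= (t-1)t gap_t + 2t <delta_t, x-breve_t - y>
    + (2/eta) (|y - x-breve_t|^2_H - |y - x-breve_(t+1)|^2_H) + eta t^2/(2(1 - eta nu)) |delta_t|^2_(H^-1).
  Telescoping over t = 1..m_k gives gap_(m_k+1) <= -zeta^k(y), and the claim is this bound
  rewritten with lambda-tilde^k and D_k = M_k - beta A^T A.\<close>

lemma symmetric_matrix_inner_commute:
  fixes G :: "real^'n^'n"
  assumes "transpose G = G"
  shows "a \<bullet> (G *v b) = b \<bullet> (G *v a)"
  by (metis assms dot_lmul_matrix inner_commute transpose_transpose vector_transpose_matrix)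

lemma qf_add:
  fixes G :: "real^'n^'n"
  assumes "transpose G = G"
  shows "qf G (a + b) = qf G a + 2 * (a \<bullet> (G *v b)) + qf G b"
  using symmetric_matrix_inner_commute[OF assms, of b a]
  by (simp add: qf_def matrix_vector_right_distrib inner_add_left inner_add_right)

lemma qf_diff:
  fixes G :: "real^'n^'n"
  assumes "transpose G = G"
  shows "qf G (a - b) = qf G a - 2 * (a \<bullet> (G *v b)) + qf G b"
  using symmetric_matrix_inner_commute[OF assms, of b a]
  by (simp add: qf_def matrix_vector_mult_diff_distrib inner_diff_left inner_diff_right)

lemma qf_scaleR: "qf G (c *\<^sub>R v) = c\<^sup>2 * qf G v"
  by (simp add: qf_def matrix_vector_mult_scaleR power2_eq_square)

lemma qf_convex_combination_le:
  fixes G :: "real^'n^'n"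
  assumes "transpose G = G" "psd G" "0 \<le> c" "c \<le> 1"
  shows "qf G (c *\<^sub>R a + (1 - c) *\<^sub>R b) \<le> c * qf G a + (1 - c) * qf G b"
proof -
  have "qf G (c *\<^sub>R a + (1 - c) *\<^sub>R b) = c * qf G a + (1 - c) * qf G b - c * (1 - c) * qf G (a - b)"
    unfolding qf_add[OF assms(1)] qf_diff[OF assms(1)] qf_scaleR
    by (simp add: matrix_vector_mult_scaleR power2_eq_square algebra_simps)
  moreover have "0 \<le> c * (1 - c) * qf G (a - b)"
    using assms(2-4) by (simp add: psd_def)
  ultimately show ?thesis by linarith
qed

lemma qf_three_point:
  fixes G :: "real^'n^'n"
  assumes "transpose G = G"
  shows "qf G (x' - x) - qf G (y - x) + qf G (y - x') = 2 * ((x' - y) \<bullet> (G *v (x' - x)))"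
proof -
  have "y - x = (y - x') + (x' - x)" by simp
  then have "qf G (y - x) = qf G (y - x') + 2 * ((y - x') \<bullet> (G *v (x' - x))) + qf G (x' - x)"
    by (metis qf_add[OF assms])
  moreover have "(x' - y) \<bullet> (G *v (x' - x)) = - ((y - x') \<bullet> (G *v (x' - x)))"
    by (simp add: inner_diff_left)
  ultimately show ?thesis by simp
qed

lemma pos_def_imp_psd: "pos_def G \<Longrightarrow> psd G"
  unfolding pos_def_def psd_def by (metis order.refl less_imp_le inner_zero_left qf_def)

lemma pos_def_matrix_inv_right:
  fixes H :: "real^'n^'n"
  assumes "pos_def H"
  shows "H *v (matrix_inv H *v a) = a"
proof -
  have "\<forall>x. H *v x = 0 \<longrightarrow> x = 0"
    using assms unfolding pos_def_def qf_def by force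
  then have "invertible H"
    using matrix_left_invertible_ker invertible_left_inverse by blast
  then have "H ** matrix_inv H = mat 1"
    unfolding invertible_def matrix_inv_def by (rule someI2_ex) blast
  then show ?thesis by (simp add: matrix_vector_mul_assoc)
qed

lemma qf_matrix_inv:
  fixes H :: "real^'n^'n"
  assumes "pos_def H"
  shows "qf (matrix_inv H) a = qf H (matrix_inv H *v a)"
  using pos_def_matrix_inv_right[OF assms] by (simp add: qf_def inner_commute)

lemma qf_matrix_inv_nonneg:
  fixes H :: "real^'n^'n"
  assumes "pos_def H"
  shows "0 \<le> qf (matrix_inv H) a"
  using assms qf_matrix_inv pos_def_imp_psd psd_def by metis

lemma young_matrix_inv:
  fixes H :: "real^'n^'n"
  assumes "transpose H = H" "pos_def H"
  shows "2 * l * (a \<bullet> w) \<le> qf H w + l\<^sup>2 * qf (matrix_inv H) a"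
proof -
  define p where "p = matrix_inv H *v a"
  have "0 \<le> qf H (w - l *\<^sub>R p)"
    using pos_def_imp_psd[OF assms(2)] psd_def by blast
  also have "\<dots> = qf H w - 2 * l * (a \<bullet> w) + l\<^sup>2 * qf (matrix_inv H) a"
    using pos_def_matrix_inv_right[OF assms(2), of a] qf_matrix_inv[OF assms(2), of a]
    by (simp add: qf_diff[OF assms(1)] qf_scaleR matrix_vector_mult_scaleR inner_commute p_def)
  finally show ?thesis by simp
qed

lemma psd_add_gram:
  fixes G :: "real^'n^'n" and A :: "real^'n^'m"
  assumes "psd G" "0 \<le> c"
  shows "psd (G + c *\<^sub>R (transpose A ** A))"
  unfolding psd_def
proof
  fix v
  have "qf (transpose A ** A) v = (A *v v) \<bullet> (A *v v)"
    by (simp add: qf_def inner_commute flip: matrix_vector_mul_assoc dot_lmul_matrix)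
  then have "qf (G + c *\<^sub>R (transpose A ** A)) v = qf G v + c * ((A *v v) \<bullet> (A *v v))"
    by (simp add: qf_def matrix_vector_mult_add_rdistrib scaleR_matrix_vector_assoc[symmetric] inner_add_right)
  then show "0 \<le> qf (G + c *\<^sub>R (transpose A ** A)) v"
    using assms unfolding psd_def by simp
qed

text \<open>Convexity and an H-Lipschitz gradient enter the analysis only through these two
  first-order bounds.\<close>
definition smooth_convex_on ::
    "(real^'n) set \<Rightarrow> real^'n^'n \<Rightarrow> real \<Rightarrow> (real^'n \<Rightarrow> real) \<Rightarrow> (real^'n \<Rightarrow> real^'n) \<Rightarrow> bool" where
  "smooth_convex_on X H nu f g \<longleftrightarrow>
     (\<forall>u\<in>X. \<forall>v\<in>X. f u + g u \<bullet> (v - u) \<le> f v \<and> f v \<le> f u + g u \<bullet> (v - u) + nu / 2 * qf H (v - u))"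

lemma has_real_derivative_along_line:
  fixes f :: "real^'n \<Rightarrow> real"
  assumes "(f has_derivative (\<lambda>h. g \<bullet> h)) (at (u + t *\<^sub>R w))"
  shows "((\<lambda>s. f (u + s *\<^sub>R w)) has_real_derivative (g \<bullet> w)) (at t)"
proof -
  have "((\<lambda>s. u + s *\<^sub>R w) has_derivative (\<lambda>s. s *\<^sub>R w)) (at t)"
    by (auto intro!: derivative_eq_intros)
  from diff_chain_at[OF this assms] show ?thesis
    by (simp add: has_field_derivative_def o_def mult_commute_abs)
qed

lemma convex_on_gradient_inequality:
  fixes f :: "real^'n \<Rightarrow> real"
  assumes "convex_on U f" and deriv: "(f has_derivative (\<lambda>h. g \<bullet> h)) (at u)"
    and "u \<in> U" "v \<in> U"
  shows "f u + g \<bullet> (v - u) \<le> f v"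
proof (rule ccontr)
  assume "\<not> ?thesis"
  then have slope: "0 < g \<bullet> (v - u) - (f v - f u)" by simp
  define \<psi> where "\<psi> = (\<lambda>s. f (u + s *\<^sub>R (v - u)) - s * (f v - f u))"
  have "(\<psi> has_real_derivative (g \<bullet> (v - u) - (f v - f u))) (at 0)"
    unfolding \<psi>_def using has_real_derivative_along_line[of f g u 0 "v - u"] deriv
    by (auto intro!: derivative_eq_intros)
  from DERIV_pos_inc_right[OF this slope] obtain d
    where "d > 0" and inc: "\<And>h. 0 < h \<Longrightarrow> h < d \<Longrightarrow> \<psi> 0 < \<psi> h" by auto
  define h where "h = min (d / 2) 1"
  have h: "0 < h" "h < d" "h \<le> 1" using \<open>d > 0\<close> by (auto simp: h_def)
  have "u + h *\<^sub>R (v - u) = (1 - h) *\<^sub>R u + h *\<^sub>R v" by (simp add: algebra_simps)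
  then have "f (u + h *\<^sub>R (v - u)) \<le> (1 - h) * f u + h * f v"
    using convex_onD[OF assms(1), of h u v] h assms(3,4) by simp
  then have "\<psi> h \<le> \<psi> 0" unfolding \<psi>_def by (simp add: algebra_simps)
  with inc[OF h(1,2)] show False by simp
qed

text \<open>Young's inequality with weight 1/nu turns the dual-norm Lipschitz condition into a
  bound on the monotonicity defect of the gradient.\<close>
lemma lipschitz_gradient_inner_le:
  fixes H :: "real^'n^'n"
  assumes "transpose H = H" "pos_def H" "nu > 0"
    and lip: "Gnorm (matrix_inv H) (g y - g x) \<le> nu * Gnorm H (y - x)"
  shows "(g y - g x) \<bullet> (y - x) \<le> nu * qf H (y - x)"
proof -
  have Q: "0 \<le> qf H (y - x)" using pos_def_imp_psd[OF assms(2)] psd_def by blast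
  have "qf (matrix_inv H) (g y - g x) \<le> (nu * Gnorm H (y - x))\<^sup>2"
    using lip qf_matrix_inv_nonneg[OF assms(2)] unfolding Gnorm_def
    by (metis power_mono real_sqrt_ge_zero real_sqrt_pow2)
  also have "\<dots> = nu\<^sup>2 * qf H (y - x)"
    using Q by (simp add: Gnorm_def power_mult_distrib)
  finally have "(1 / nu)\<^sup>2 * qf (matrix_inv H) (g y - g x) \<le> qf H (y - x)"
    using \<open>nu > 0\<close> by (simp add: field_simps)
  with young_matrix_inv[OF assms(1,2), of "1 / nu" "g y - g x" "y - x"]
  have "2 / nu * ((g y - g x) \<bullet> (y - x)) \<le> 2 * qf H (y - x)" by simp
  with \<open>nu > 0\<close> show ?thesis by (simp add: field_simps)
qed

lemma descent_lemma:
  fixes f :: "real^'n \<Rightarrow> real" and H :: "real^'n^'n"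
  assumes "transpose H = H" "pos_def H" "nu > 0" "convex X" "X \<subseteq> U"
    and deriv: "\<forall>y\<in>U. (f has_derivative (\<lambda>h. g y \<bullet> h)) (at y)"
    and lip: "\<forall>y1\<in>X. \<forall>y2\<in>X. Gnorm (matrix_inv H) (g y1 - g y2) \<le> nu * Gnorm H (y1 - y2)"
    and "u \<in> X" "v \<in> X"
  shows "f v \<le> f u + g u \<bullet> (v - u) + nu / 2 * qf H (v - u)"
proof -
  define w where "w = v - u"
  define \<psi> where "\<psi> = (\<lambda>s. f (u + s *\<^sub>R w) - s * (g u \<bullet> w) - nu * s\<^sup>2 / 2 * qf H w)"
  have "\<psi> 1 \<le> \<psi> 0"
  proof (rule DERIV_nonpos_imp_nonincreasing[of 0 1 \<psi>])
    fix t :: real assume t: "0 \<le> t" "t \<le> 1"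
    have "u + t *\<^sub>R w = (1 - t) *\<^sub>R u + t *\<^sub>R v" by (simp add: w_def algebra_simps)
    then have ptX: "u + t *\<^sub>R w \<in> X" using convexD[OF assms(4,8,9), of "1 - t" t] t by simp
    then have "((\<lambda>s. f (u + s *\<^sub>R w)) has_real_derivative g (u + t *\<^sub>R w) \<bullet> w) (at t)"
      using has_real_derivative_along_line deriv assms(5) by blast
    then have "(\<psi> has_real_derivative (g (u + t *\<^sub>R w) \<bullet> w - g u \<bullet> w - nu * t * qf H w)) (at t)"
      unfolding \<psi>_def by (auto intro!: derivative_eq_intros simp: power2_eq_square algebra_simps)
    moreover have "(g (u + t *\<^sub>R w) - g u) \<bullet> (t *\<^sub>R w) \<le> nu * qf H (t *\<^sub>R w)"
      using lipschitz_gradient_inner_le[OF assms(1-3)] lip ptX \<open>u \<in> X\<close>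
      by (metis add_diff_cancel_left')
    then have "t * ((g (u + t *\<^sub>R w) - g u) \<bullet> w) \<le> t * (nu * t * qf H w)"
      by (simp add: qf_scaleR power2_eq_square algebra_simps)
    then have "g (u + t *\<^sub>R w) \<bullet> w - g u \<bullet> w - nu * t * qf H w \<le> 0"
      using t by (cases "t = 0") (auto simp: inner_diff_left mult_le_cancel_left_pos)
    ultimately show "\<exists>y. (\<psi> has_real_derivative y) (at t) \<and> y \<le> 0" by blast
  qed simp
  then show ?thesis unfolding \<psi>_def w_def by simp
qed

lemma smooth_convex_onI:
  fixes f :: "real^'n \<Rightarrow> real" and H :: "real^'n^'n"
  assumes "transpose H = H" "pos_def H" "nu > 0" "convex X" "X \<subseteq> U" "convex_on U f"
    and "\<forall>y\<in>U. (f has_derivative (\<lambda>h. g y \<bullet> h)) (at y)"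
    and "\<forall>y1\<in>X. \<forall>y2\<in>X. Gnorm (matrix_inv H) (g y1 - g y2) \<le> nu * Gnorm H (y1 - y2)"
  shows "smooth_convex_on X H nu f g"
  unfolding smooth_convex_on_def
  using convex_on_gradient_inequality[OF assms(6)] descent_lemma[OF assms(1-5,7,8)] assms(5,7)
  by blast

lemma smooth_convex_on_average:
  assumes "finite J" "J \<noteq> {}" "\<forall>j\<in>J. smooth_convex_on X H nu (f j) (g j)"
  shows "smooth_convex_on X H nu (\<lambda>z. (1 / real (card J)) * (\<Sum>j\<in>J. f j z))
                               (\<lambda>z. (1 / real (card J)) *\<^sub>R (\<Sum>j\<in>J. g j z))"
  unfolding smooth_convex_on_def
proof (intro ballI conjI)
  fix u v assume "u \<in> X" "v \<in> X"
  define r where "r = (\<lambda>j. f j v - f j u - g j u \<bullet> (v - u))"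
  have J: "0 < real (card J)" using assms(1,2) by (simp add: card_gt_0_iff)
  have "(\<Sum>j\<in>J. r j) = (\<Sum>j\<in>J. f j v) - (\<Sum>j\<in>J. f j u) - (\<Sum>j\<in>J. g j u) \<bullet> (v - u)"
    by (simp add: r_def sum_subtractf inner_sum_left)
  then have avg: "(1 / real (card J)) * (\<Sum>j\<in>J. f j v) - (1 / real (card J)) * (\<Sum>j\<in>J. f j u)
      - ((1 / real (card J)) *\<^sub>R (\<Sum>j\<in>J. g j u)) \<bullet> (v - u) = (1 / real (card J)) * (\<Sum>j\<in>J. r j)"
    by (simp add: right_diff_distrib)
  have "\<forall>j\<in>J. 0 \<le> r j \<and> r j \<le> nu / 2 * qf H (v - u)"
    using assms(3) \<open>u \<in> X\<close> \<open>v \<in> X\<close> unfolding smooth_convex_on_def r_def by fastforce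
  then have "0 \<le> (\<Sum>j\<in>J. r j)" "(\<Sum>j\<in>J. r j) \<le> real (card J) * (nu / 2 * qf H (v - u))"
    by (meson sum_nonneg, meson sum_bounded_above)
  then have "0 \<le> (1 / real (card J)) * (\<Sum>j\<in>J. r j)"
    "(1 / real (card J)) * (\<Sum>j\<in>J. r j) \<le> nu / 2 * qf H (v - u)"
    using J by (simp_all add: pos_divide_le_eq mult.commute)
  with avg show "(1 / real (card J)) * (\<Sum>j\<in>J. f j u) + ((1 / real (card J)) *\<^sub>R (\<Sum>j\<in>J. g j u)) \<bullet> (v - u)
      \<le> (1 / real (card J)) * (\<Sum>j\<in>J. f j v)"
    and "(1 / real (card J)) * (\<Sum>j\<in>J. f j v) \<le> (1 / real (card J)) * (\<Sum>j\<in>J. f j u)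
      + ((1 / real (card J)) *\<^sub>R (\<Sum>j\<in>J. g j u)) \<bullet> (v - u) + nu / 2 * qf H (v - u)"
    by linarith+
qed

lemma nonneg_of_quadratic_nonneg_near_zero:
  fixes a K :: real
  assumes "\<And>s. 0 < s \<Longrightarrow> s \<le> 1 \<Longrightarrow> 0 \<le> s * a + s\<^sup>2 * K"
  shows "0 \<le> a"
proof (rule tendsto_lowerbound)
  show "((\<lambda>s. a + s * K) \<longlongrightarrow> a) (at_right 0)"
    by (auto intro!: tendsto_eq_intros)
  have "0 \<le> a + s * K" if "s \<in> {0<..<1}" for s
  proof -
    have "0 \<le> s * (a + s * K)"
      using assms[of s] that by (simp add: power2_eq_square distrib_left mult.assoc)
    with that show ?thesis by (simp add: zero_le_mult_iff)
  qed
  then show "\<forall>\<^sub>F s in at_right 0. 0 \<le> a + s * K"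
    using eventually_at_right_real[of 0 1] by (auto elim: eventually_mono)
qed simp

text \<open>Optimality of a proximal step: minimality on the segment towards y forces a nonnegative
  directional derivative, and the quadratic part of the objective adds the extra terms.\<close>
lemma prox_three_point:
  fixes H M :: "real^'n^'n" and L c x :: "real^'n" and \<gamma> :: real
  defines "\<Phi> \<equiv> \<lambda>z. L \<bullet> z + \<gamma> / 2 * qf H (z - c) + 1 / 2 * qf M (z - x)"
  assumes "transpose H = H" "transpose M = M" "psd H" "psd M" "0 \<le> \<gamma>"
    and "convex X" "u \<in> X" "y \<in> X" and min: "\<forall>z\<in>X. \<Phi> u \<le> \<Phi> z"
  shows "\<Phi> u + \<gamma> / 2 * qf H (y - u) + 1 / 2 * qf M (y - u) \<le> \<Phi> y"
proof -
  define w where "w = y - u"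
  define a where "a = L \<bullet> w + \<gamma> * ((u - c) \<bullet> (H *v w)) + (u - x) \<bullet> (M *v w)"
  define K where "K = \<gamma> / 2 * qf H w + 1 / 2 * qf M w"
  have along: "\<Phi> (u + s *\<^sub>R w) = \<Phi> u + s * a + s\<^sup>2 * K" for s
  proof -
    have eH: "qf H (u + s *\<^sub>R w - c) = qf H (u - c) + 2 * s * ((u - c) \<bullet> (H *v w)) + s\<^sup>2 * qf H w"
      using qf_add[OF assms(2), of "u - c" "s *\<^sub>R w"]
      by (simp add: qf_scaleR matrix_vector_mult_scaleR algebra_simps)
    have eM: "qf M (u + s *\<^sub>R w - x) = qf M (u - x) + 2 * s * ((u - x) \<bullet> (M *v w)) + s\<^sup>2 * qf M w"
      using qf_add[OF assms(3), of "u - x" "s *\<^sub>R w"]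
      by (simp add: qf_scaleR matrix_vector_mult_scaleR algebra_simps)
    show ?thesis
      unfolding \<Phi>_def a_def K_def by (simp only: eH eM) (simp add: inner_add_right algebra_simps)
  qed
  have "0 \<le> a"
  proof (rule nonneg_of_quadratic_nonneg_near_zero)
    fix s :: real assume "0 < s" "s \<le> 1"
    have "u + s *\<^sub>R w = (1 - s) *\<^sub>R u + s *\<^sub>R y" by (simp add: w_def algebra_simps)
    then have "u + s *\<^sub>R w \<in> X" using convexD[OF assms(7-9)] \<open>0 < s\<close> \<open>s \<le> 1\<close> by simp
    with min along show "0 \<le> s * a + s\<^sup>2 * K" by force
  qed
  with along[of 1] show ?thesis by (simp add: w_def K_def)
qed

lemma smooth_convex_on_averaging_step:
  assumes "smooth_convex_on X H nu f g" "convex X" "u \<in> X" "u' \<in> X" "p \<in> X" "0 \<le> b" "b \<le> 1"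
  defines "q \<equiv> b *\<^sub>R u + (1 - b) *\<^sub>R p"
  shows "f (b *\<^sub>R u' + (1 - b) *\<^sub>R p)
      \<le> (1 - b) * f p + b * (f q + g q \<bullet> (u' - q)) + nu / 2 * b\<^sup>2 * qf H (u' - u)"
proof -
  define p' where "p' = b *\<^sub>R u' + (1 - b) *\<^sub>R p"
  have "q \<in> X" "p' \<in> X"
    unfolding q_def p'_def using convexD[OF assms(2)] assms(3-7) by simp_all
  have "f p' \<le> f q + g q \<bullet> (p' - q) + nu / 2 * qf H (p' - q)"
    using assms(1) \<open>q \<in> X\<close> \<open>p' \<in> X\<close> unfolding smooth_convex_on_def by blast
  also have "p' - q = b *\<^sub>R (u' - u)"
    unfolding p'_def q_def by (simp add: algebra_simps)
  also have "g q \<bullet> (b *\<^sub>R (u' - u)) = (1 - b) * (g q \<bullet> (p - q)) + b * (g q \<bullet> (u' - q))"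
    unfolding q_def by (simp add: inner_diff_right inner_add_right algebra_simps)
  also have "f q + ((1 - b) * (g q \<bullet> (p - q)) + b * (g q \<bullet> (u' - q))) + nu / 2 * qf H (b *\<^sub>R (u' - u))
      = (1 - b) * (f q + g q \<bullet> (p - q)) + b * (f q + g q \<bullet> (u' - q)) + nu / 2 * b\<^sup>2 * qf H (u' - u)"
    unfolding qf_scaleR by (simp add: algebra_simps)
  also have "\<dots> \<le> (1 - b) * f p + b * (f q + g q \<bullet> (u' - q)) + nu / 2 * b\<^sup>2 * qf H (u' - u)"
    using assms(1,7) \<open>q \<in> X\<close> \<open>p \<in> X\<close> unfolding smooth_convex_on_def by (simp add: mult_left_mono)
  finally show ?thesis unfolding p'_def .
qed

lemma averaged_iterates_in_convex:
  assumes "convex X" "p 1 \<in> X"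
    and step: "\<And>t. 1 \<le> t \<Longrightarrow> t \<le> n \<Longrightarrow>
      u (t + 1) \<in> X \<and> p (t + 1) = (2 / (real t + 1)) *\<^sub>R u (t + 1) + (1 - 2 / (real t + 1)) *\<^sub>R p t"
    and "1 \<le> t" "t \<le> n + 1"
  shows "p t \<in> X"
  using assms(4,5)
proof (induction t rule: dec_induct)
  case base show ?case using assms(2) .
next
  case (step t)
  have "0 \<le> 2 / (real t + 1)" "2 / (real t + 1) \<le> 1" using step.hyps by auto
  with assms(3)[of t] step convexD[OF assms(1)] show ?case by simp
qed

lemma telescoping_le:
  fixes a r :: "nat \<Rightarrow> real"
  assumes "\<And>t. 1 \<le> t \<Longrightarrow> t \<le> n \<Longrightarrow> a t \<le> a (t - 1) + r t"
  shows "a n \<le> a 0 + (\<Sum>t=1..n. r t)"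
  using assms by (induction n) (fastforce simp: add_increasing2)+

lemma accelerated_weight_le:
  fixes t eta nu :: real
  assumes "t \<ge> 1" "eta > 0" "nu \<ge> 0" "eta * nu < 1"
  defines "c \<equiv> (2 / (t + 1)) * (2 / (t * eta)) - nu * (2 / (t + 1))\<^sup>2"
  shows "0 < c" "t * (t + 1) * ((2 / (t + 1))\<^sup>2 / (2 * c)) \<le> eta * t\<^sup>2 / (2 * (1 - eta * nu))"
proof -
  have "(eta * nu) * t < 1 * t"
    using assms(1,4) by (intro mult_strict_right_mono) simp_all
  then have "nu * t * eta < t + 1" by (simp add: algebra_simps)
  then have pos: "0 < (t + 1) - nu * t * eta" by simp
  have c: "c = 4 * ((t + 1) - nu * t * eta) / (t * eta * (t + 1)\<^sup>2)"
  proof -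
    have "t \<noteq> 0" "t + 1 \<noteq> 0" "eta \<noteq> 0" using assms(1,2) by auto
    then show ?thesis unfolding c_def by (simp add: divide_simps) (simp add: algebra_simps power2_eq_square)
  qed
  show "0 < c" unfolding c using pos assms(1,2) by simp
  have "(2 / (t + 1))\<^sup>2 / (2 * c) = t * eta / (2 * ((t + 1) - nu * t * eta))"
  proof -
    have "t \<noteq> 0" "t + 1 \<noteq> 0" "eta \<noteq> 0" using assms(1,2) by auto
    with pos show ?thesis unfolding c by (simp add: divide_simps)
  qed
  then have "t * (t + 1) * ((2 / (t + 1))\<^sup>2 / (2 * c)) = eta * t\<^sup>2 * ((t + 1) / (2 * ((t + 1) - nu * t * eta)))"
    by (simp add: power2_eq_square)
  also have "\<dots> \<le> eta * t\<^sup>2 * (1 / (2 * (1 - eta * nu)))"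
    using pos assms by (intro mult_left_mono) (simp_all add: divide_simps algebra_simps)
  finally show "t * (t + 1) * ((2 / (t + 1))\<^sup>2 / (2 * c)) \<le> eta * t\<^sup>2 / (2 * (1 - eta * nu))"
    by simp
qed

locale prox_inner_loop =
  fixes X :: "(real^'n) set" and H M :: "real^'n^'n" and nu eta :: real
    and f :: "real^'n \<Rightarrow> real" and g :: "real^'n \<Rightarrow> real^'n"
    and h x0 :: "real^'n" and m :: nat and d p u :: "nat \<Rightarrow> real^'n"
  assumes convex_X: "convex X"
    and H: "transpose H = H" "pos_def H" and M: "transpose M = M" "psd M"
    and nu: "nu > 0" and eta: "eta > 0" "eta * nu < 1"
    and smooth: "smooth_convex_on X H nu f g"
    and start: "p 1 \<in> X" "u 1 \<in> X"
    and step: "\<And>t. 1 \<le> t \<Longrightarrow> t \<le> m \<Longrightarrow>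
      u (t + 1) \<in> X \<and>
      (\<forall>z\<in>X. (d t + h) \<bullet> u (t + 1) + 2 / (real t * eta) / 2 * qf H (u (t + 1) - u t) + 1 / 2 * qf M (u (t + 1) - x0)
              \<le> (d t + h) \<bullet> z + 2 / (real t * eta) / 2 * qf H (z - u t) + 1 / 2 * qf M (z - x0)) \<and>
      p (t + 1) = (2 / (real t + 1)) *\<^sub>R u (t + 1) + (1 - 2 / (real t + 1)) *\<^sub>R p t"
begin

text \<open>One call of the subroutine, started at x0 = x^k: p, u, q, d, \<beta>, \<gamma> are the paper's
  x, x-breve, x-hat, d, beta, gamma; \<psi> adds the proximal term to the linear term h = h^k of the
  augmented Lagrangian, and gap y t is the potential of the accelerated stochastic approximation
  analysis.\<close>

definition \<beta> :: "nat \<Rightarrow> real" where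
  "\<beta> t = 2 / (real t + 1)"

definition \<gamma> :: "nat \<Rightarrow> real" where
  "\<gamma> t = 2 / (real t * eta)"

definition q :: "nat \<Rightarrow> real^'n" where
  "q t = \<beta> t *\<^sub>R u t + (1 - \<beta> t) *\<^sub>R p t"

definition \<delta> :: "nat \<Rightarrow> real^'n" where
  "\<delta> t = g (q t) - d t"

definition \<psi> :: "real^'n \<Rightarrow> real" where
  "\<psi> z = h \<bullet> z + 1 / 2 * qf M (z - x0)"

definition gap :: "real^'n \<Rightarrow> nat \<Rightarrow> real" where
  "gap y t = f (p t) + \<psi> (p t) - (f y + \<psi> y) + 1 / 2 * qf M (y - p t)"

lemma iterates_in_X:
  assumes "1 \<le> t" "t \<le> m + 1"
  shows "p t \<in> X" "u t \<in> X"
proof -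
  show "p t \<in> X"
    using averaged_iterates_in_convex[of X p m u t] convex_X start(1) step assms by blast
  show "u t \<in> X"
  proof (cases "t = 1")
    case False
    with assms step[of "t - 1"] show ?thesis by simp
  qed (use start in simp)
qed

lemma subroutine_step:
  assumes "1 \<le> t" "t \<le> m"
  shows "\<forall>z\<in>X. (d t + h) \<bullet> u (t + 1) + \<gamma> t / 2 * qf H (u (t + 1) - u t) + 1 / 2 * qf M (u (t + 1) - x0)
              \<le> (d t + h) \<bullet> z + \<gamma> t / 2 * qf H (z - u t) + 1 / 2 * qf M (z - x0)"
    and "p (t + 1) = \<beta> t *\<^sub>R u (t + 1) + (1 - \<beta> t) *\<^sub>R p t"
  using step[OF assms] unfolding \<beta>_def \<gamma>_def by auto

lemma \<beta>_bounds: "1 \<le> t \<Longrightarrow> 0 \<le> \<beta> t \<and> \<beta> t \<le> 1"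
  by (simp add: \<beta>_def)

lemma q_in_X:
  assumes "1 \<le> t" "t \<le> m"
  shows "q t \<in> X"
  using convexD[OF convex_X iterates_in_X(2,1)[of t]] \<beta>_bounds[of t] assms unfolding q_def by simp

lemma \<psi>_convex_combination_le:
  assumes "0 \<le> b" "b \<le> 1"
  shows "\<psi> (b *\<^sub>R a + (1 - b) *\<^sub>R c) \<le> b * \<psi> a + (1 - b) * \<psi> c"
proof -
  have "b *\<^sub>R a + (1 - b) *\<^sub>R c - x0 = b *\<^sub>R (a - x0) + (1 - b) *\<^sub>R (c - x0)"
    by (simp add: algebra_simps)
  then have "qf M (b *\<^sub>R a + (1 - b) *\<^sub>R c - x0) \<le> b * qf M (a - x0) + (1 - b) * qf M (c - x0)"
    using qf_convex_combination_le[OF M assms] by simp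
  moreover have "h \<bullet> (b *\<^sub>R a + (1 - b) *\<^sub>R c) = b * (h \<bullet> a) + (1 - b) * (h \<bullet> c)"
    by (simp add: inner_add_right)
  ultimately have "\<psi> (b *\<^sub>R a + (1 - b) *\<^sub>R c)
      \<le> b * (h \<bullet> a) + (1 - b) * (h \<bullet> c) + 1 / 2 * (b * qf M (a - x0) + (1 - b) * qf M (c - x0))"
    unfolding \<psi>_def by (simp add: ring_distribs)
  also have "\<dots> = b * \<psi> a + (1 - b) * \<psi> c"
    unfolding \<psi>_def by (simp add: field_simps)
  finally show ?thesis .
qed

lemma gap_step_averaging:
  assumes t: "1 \<le> t" "t \<le> m" and "y \<in> X"
  shows "gap y (t + 1) \<le> (1 - \<beta> t) * gap y t
    + \<beta> t * (f (q t) + g (q t) \<bullet> (u (t + 1) - q t) + \<psi> (u (t + 1)) + 1 / 2 * qf M (y - u (t + 1)) - (f y + \<psi> y))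
    + nu / 2 * (\<beta> t)\<^sup>2 * qf H (u (t + 1) - u t)"
proof -
  define b where "b = \<beta> t"
  define u' where "u' = u (t + 1)"
  have b: "0 \<le> b" "b \<le> 1" using \<beta>_bounds t unfolding b_def by auto
  have p': "p (t + 1) = b *\<^sub>R u' + (1 - b) *\<^sub>R p t" using subroutine_step(2)[OF t] unfolding b_def u'_def .
  have "u t \<in> X" "u' \<in> X" "p t \<in> X" using iterates_in_X t unfolding u'_def by auto
  then have f_step: "f (p (t + 1)) \<le> (1 - b) * f (p t) + b * (f (q t) + g (q t) \<bullet> (u' - q t)) + nu / 2 * b\<^sup>2 * qf H (u' - u t)"
    unfolding p' q_def b_def[symmetric] by (rule smooth_convex_on_averaging_step[OF smooth convex_X _ _ _ b])
  have \<psi>_step: "\<psi> (p (t + 1)) \<le> (1 - b) * \<psi> (p t) + b * \<psi> u'"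
    unfolding p' using \<psi>_convex_combination_le[OF b] by (simp add: algebra_simps)
  have dist_step: "qf M (y - p (t + 1)) \<le> (1 - b) * qf M (y - p t) + b * qf M (y - u')"
  proof -
    have "y - p (t + 1) = b *\<^sub>R (y - u') + (1 - b) *\<^sub>R (y - p t)" unfolding p' by (simp add: algebra_simps)
    then show ?thesis using qf_convex_combination_le[OF M b, of "y - u'" "y - p t"] by simp
  qed
  have "gap y (t + 1) \<le> ((1 - b) * f (p t) + b * (f (q t) + g (q t) \<bullet> (u' - q t)) + nu / 2 * b\<^sup>2 * qf H (u' - u t))
      + ((1 - b) * \<psi> (p t) + b * \<psi> u') + 1 / 2 * ((1 - b) * qf M (y - p t) + b * qf M (y - u'))
      - (f y + \<psi> y)"
    unfolding gap_def using f_step \<psi>_step dist_step by (simp add: ring_distribs)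
  also have "\<dots> = (1 - b) * gap y t
      + b * (f (q t) + g (q t) \<bullet> (u' - q t) + \<psi> u' + 1 / 2 * qf M (y - u') - (f y + \<psi> y))
      + nu / 2 * b\<^sup>2 * qf H (u' - u t)"
    unfolding gap_def by (simp add: field_simps)
  finally show ?thesis unfolding b_def u'_def .
qed

lemma prox_step_bound:
  assumes t: "1 \<le> t" "t \<le> m" and "y \<in> X"
  shows "f (q t) + g (q t) \<bullet> (u (t + 1) - q t) + \<psi> (u (t + 1)) + 1 / 2 * qf M (y - u (t + 1)) - (f y + \<psi> y)
    \<le> \<delta> t \<bullet> (u t - y) + \<delta> t \<bullet> (u (t + 1) - u t)
      + \<gamma> t / 2 * (qf H (y - u t) - qf H (y - u (t + 1))) - \<gamma> t / 2 * qf H (u (t + 1) - u t)"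
proof -
  have "0 \<le> \<gamma> t" using eta by (simp add: \<gamma>_def)
  have "u (t + 1) \<in> X" using iterates_in_X t by simp
  have "(d t + h) \<bullet> u (t + 1) + \<gamma> t / 2 * qf H (u (t + 1) - u t) + 1 / 2 * qf M (u (t + 1) - x0)
      + \<gamma> t / 2 * qf H (y - u (t + 1)) + 1 / 2 * qf M (y - u (t + 1))
      \<le> (d t + h) \<bullet> y + \<gamma> t / 2 * qf H (y - u t) + 1 / 2 * qf M (y - x0)"
    by (rule prox_three_point[OF H(1) M(1) pos_def_imp_psd[OF H(2)] M(2) \<open>0 \<le> \<gamma> t\<close> convex_X
          \<open>u (t + 1) \<in> X\<close> \<open>y \<in> X\<close> subroutine_step(1)[OF t]])
  moreover have "f (q t) + g (q t) \<bullet> (y - q t) \<le> f y"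
    using smooth q_in_X[OF t] \<open>y \<in> X\<close> unfolding smooth_convex_on_def by blast
  ultimately show ?thesis
    unfolding \<psi>_def \<delta>_def by (simp add: inner_add_left inner_diff_left inner_diff_right algebra_simps)
qed

text \<open>Young's inequality absorbs the gradient error into the part of the H-proximal term left
  over by the smoothness of f; this is where eta * nu < 1 is needed.\<close>
lemma gap_step:
  assumes t: "1 \<le> t" "t \<le> m" and "y \<in> X"
  defines "c \<equiv> \<beta> t * \<gamma> t - nu * (\<beta> t)\<^sup>2"
  shows "gap y (t + 1) \<le> (1 - \<beta> t) * gap y t + \<beta> t * (\<delta> t \<bullet> (u t - y))
    + \<beta> t * \<gamma> t / 2 * (qf H (y - u t) - qf H (y - u (t + 1))) + (\<beta> t)\<^sup>2 / (2 * c) * qf (matrix_inv H) (\<delta> t)"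
proof -
  define b where "b = \<beta> t"
  define Q where "Q = qf H (u (t + 1) - u t)"
  have "0 \<le> b" using \<beta>_bounds t unfolding b_def by auto
  have "0 < c"
    using accelerated_weight_le(1)[of "real t" eta nu] t eta nu unfolding c_def \<beta>_def \<gamma>_def by simp
  have "gap y (t + 1) \<le> (1 - b) * gap y t + b * (\<delta> t \<bullet> (u t - y) + \<delta> t \<bullet> (u (t + 1) - u t)
      + \<gamma> t / 2 * (qf H (y - u t) - qf H (y - u (t + 1))) - \<gamma> t / 2 * Q) + nu / 2 * b\<^sup>2 * Q"
    using gap_step_averaging[OF assms(1-3)] mult_left_mono[OF prox_step_bound[OF assms(1-3)] \<open>0 \<le> b\<close>]
    unfolding b_def Q_def by linarith
  also have "\<dots> = (1 - b) * gap y t + b * (\<delta> t \<bullet> (u t - y))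
      + b * \<gamma> t / 2 * (qf H (y - u t) - qf H (y - u (t + 1))) + (b * (\<delta> t \<bullet> (u (t + 1) - u t)) - c / 2 * Q)"
    unfolding c_def b_def by (simp add: field_simps power2_eq_square)
  also have "b * (\<delta> t \<bullet> (u (t + 1) - u t)) - c / 2 * Q \<le> b\<^sup>2 / (2 * c) * qf (matrix_inv H) (\<delta> t)"
    using young_matrix_inv[OF H, of "b / c" "\<delta> t" "u (t + 1) - u t"] \<open>0 < c\<close>
    unfolding Q_def by (simp add: field_simps power2_eq_square)
  finally show ?thesis unfolding b_def by simp
qed

lemma gap_step_weighted:
  assumes t: "1 \<le> t" "t \<le> m" and "y \<in> X"
  shows "real t * (real t + 1) * gap y (t + 1) \<le> real t * (real t - 1) * gap y t
    + 2 * real t * (\<delta> t \<bullet> (u t - y)) + 2 / eta * (qf H (y - u t) - qf H (y - u (t + 1)))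
    + eta * (real t)\<^sup>2 / (2 * (1 - eta * nu)) * qf (matrix_inv H) (\<delta> t)"
proof -
  define c where "c = \<beta> t * \<gamma> t - nu * (\<beta> t)\<^sup>2"
  define w where "w = real t * (real t + 1)"
  have w: "w * (1 - \<beta> t) = real t * (real t - 1)" "w * \<beta> t = 2 * real t" "w * (\<beta> t * \<gamma> t / 2) = 2 / eta"
  proof -
    have "real t \<noteq> 0" "real t + 1 \<noteq> 0" "eta \<noteq> 0" using t eta by auto
    then show "w * (1 - \<beta> t) = real t * (real t - 1)" "w * \<beta> t = 2 * real t"
        "w * (\<beta> t * \<gamma> t / 2) = 2 / eta"
      by (simp_all add: w_def \<beta>_def \<gamma>_def divide_simps)
  qed
  have weight: "w * ((\<beta> t)\<^sup>2 / (2 * c)) \<le> eta * (real t)\<^sup>2 / (2 * (1 - eta * nu))"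
    using accelerated_weight_le(2)[of "real t" eta nu] t eta nu
    unfolding w_def c_def \<beta>_def \<gamma>_def by simp
  have "w * gap y (t + 1) \<le> w * ((1 - \<beta> t) * gap y t + \<beta> t * (\<delta> t \<bullet> (u t - y))
      + \<beta> t * \<gamma> t / 2 * (qf H (y - u t) - qf H (y - u (t + 1))) + (\<beta> t)\<^sup>2 / (2 * c) * qf (matrix_inv H) (\<delta> t))"
    using gap_step[OF assms] unfolding c_def w_def by (intro mult_left_mono) simp_all
  also have "\<dots> = real t * (real t - 1) * gap y t + 2 * real t * (\<delta> t \<bullet> (u t - y))
      + 2 / eta * (qf H (y - u t) - qf H (y - u (t + 1))) + w * ((\<beta> t)\<^sup>2 / (2 * c)) * qf (matrix_inv H) (\<delta> t)"
    unfolding w[symmetric] by (simp add: algebra_simps)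
  also have "\<dots> \<le> real t * (real t - 1) * gap y t + 2 * real t * (\<delta> t \<bullet> (u t - y))
      + 2 / eta * (qf H (y - u t) - qf H (y - u (t + 1)))
      + eta * (real t)\<^sup>2 / (2 * (1 - eta * nu)) * qf (matrix_inv H) (\<delta> t)"
    by (intro add_left_mono mult_right_mono weight qf_matrix_inv_nonneg[OF H(2)])
  finally show ?thesis unfolding w_def .
qed

lemma gap_bound:
  assumes "1 \<le> m" "y \<in> X"
  shows "gap y (m + 1) \<le> - (2 / (real m * (real m + 1)) *
    ((1 / eta) * (qf H (y - u (m + 1)) - qf H (y - u 1))
     - (\<Sum>t=1..m. real t * (\<delta> t \<bullet> (u t - y)))
     - eta / (4 * (1 - eta * nu)) * (\<Sum>t=1..m. (real t)\<^sup>2 * qf (matrix_inv H) (\<delta> t))))"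
proof -
  define r where "r t = 2 * real t * (\<delta> t \<bullet> (u t - y))
      + eta * (real t)\<^sup>2 / (2 * (1 - eta * nu)) * qf (matrix_inv H) (\<delta> t)" for t
  define a where "a T = real T * (real T + 1) * gap y (T + 1) + 2 / eta * qf H (y - u (T + 1))" for T
  have "a m \<le> a 0 + (\<Sum>t=1..m. r t)"
  proof (rule telescoping_le)
    fix t assume "1 \<le> t" "t \<le> m"
    then show "a t \<le> a (t - 1) + r t"
      using gap_step_weighted[of t y] \<open>y \<in> X\<close> by (simp add: a_def r_def of_nat_diff algebra_simps)
  qed
  moreover have "(\<Sum>t=1..m. r t) = 2 * (\<Sum>t=1..m. real t * (\<delta> t \<bullet> (u t - y)))
      + 2 * (eta / (4 * (1 - eta * nu))) * (\<Sum>t=1..m. (real t)\<^sup>2 * qf (matrix_inv H) (\<delta> t))"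
  proof -
    have "r t = 2 * (real t * (\<delta> t \<bullet> (u t - y)))
        + 2 * (eta / (4 * (1 - eta * nu))) * ((real t)\<^sup>2 * qf (matrix_inv H) (\<delta> t))" for t
      using eta by (simp add: r_def field_simps)
    then show ?thesis by (simp add: sum.distrib sum_distrib_left)
  qed
  ultimately have "real m * (real m + 1) * gap y (m + 1) \<le> - 2 *
    ((1 / eta) * (qf H (y - u (m + 1)) - qf H (y - u 1))
     - (\<Sum>t=1..m. real t * (\<delta> t \<bullet> (u t - y)))
     - eta / (4 * (1 - eta * nu)) * (\<Sum>t=1..m. (real t)\<^sup>2 * qf (matrix_inv H) (\<delta> t)))"
    by (simp add: a_def algebra_simps)
  moreover have "0 < real m * (real m + 1)" using assms(1) by simp
  ultimately show ?thesis by (simp add: field_simps)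
qed

lemma gap_eq_linearized:
  "gap y t = f (p t) - f y + (p t - y) \<bullet> (h + M *v (p t - x0))"
  using qf_three_point[OF M(1), of "p t" x0 y]
    inner_diff_left[of "p t" y h] inner_commute[of "p t" h] inner_commute[of y h]
  unfolding gap_def \<psi>_def inner_add_right by linarith

lemma inner_loop_inequality:
  assumes "1 \<le> m" "y \<in> X"
  shows "f y - f (p (m + 1)) + (y - p (m + 1)) \<bullet> (h + M *v (p (m + 1) - x0))
    \<ge> 2 / (real m * (real m + 1)) *
    ((1 / eta) * (qf H (y - u (m + 1)) - qf H (y - u 1))
     - (\<Sum>t=1..m. real t * (\<delta> t \<bullet> (u t - y)))
     - eta / (4 * (1 - eta * nu)) * (\<Sum>t=1..m. (real t)\<^sup>2 * qf (matrix_inv H) (\<delta> t)))"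
proof -
  have "(y - p (m + 1)) \<bullet> (h + M *v (p (m + 1) - x0)) = - ((p (m + 1) - y) \<bullet> (h + M *v (p (m + 1) - x0)))"
    by (simp add: inner_diff_left)
  with gap_bound[OF assms] gap_eq_linearized[of y "m + 1"] show ?thesis by linarith
qed

end

lemma augmented_lagrangian_multiplier_identity:
  fixes A :: "real^'n^'m" and M :: "real^'n^'n"
  shows "(y - x') \<bullet> (- (transpose A *v (lam - beta *\<^sub>R (A *v x' - b))))
      - (x' - y) \<bullet> ((M - beta *\<^sub>R (transpose A ** A)) *v (x' - x))
    = (y - x') \<bullet> (- (transpose A *v (lam - beta *\<^sub>R (A *v x - b))) + M *v (x' - x))"
proof -
  define v where "v = transpose A *v (A *v (x' - x))"
  have "- (transpose A *v (lam - beta *\<^sub>R (A *v x' - b)))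
      = - (transpose A *v (lam - beta *\<^sub>R (A *v x - b))) + beta *\<^sub>R v"
    unfolding v_def
    by (simp del: transpose_matrix_vector add: matrix_vector_right_distrib
        matrix_vector_mult_diff_distrib matrix_vector_mult_scaleR algebra_simps)
  moreover have "(M - beta *\<^sub>R (transpose A ** A)) *v (x' - x) = M *v (x' - x) - beta *\<^sub>R v"
    unfolding v_def
    by (simp del: transpose_matrix_vector add: matrix_vector_mult_diff_rdistrib
        scaleR_matrix_vector_assoc[symmetric] matrix_vector_mul_assoc)
  moreover have "x' - y = - (y - x')" by simp
  ultimately show ?thesis
    by (simp only: inner_add_right inner_diff_right inner_minus_left)
qed

lemma outer_iterates_in_convex:
  fixes x xb :: "nat \<Rightarrow> real^'n" and k :: nat
  assumes "convex X" "x 0 \<in> X" "xb 0 = x 0"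
    and init: "\<forall>k. xin k 1 = x k \<and> xbin k 1 = xb k"
    and step: "\<And>k t. 1 \<le> t \<Longrightarrow> t \<le> m k \<Longrightarrow> xbin k (t + 1) \<in> X \<and>
      xin k (t + 1) = (2 / (real t + 1)) *\<^sub>R xbin k (t + 1) + (1 - 2 / (real t + 1)) *\<^sub>R xin k t"
    and outer: "\<forall>k. x (k + 1) = xin k (m k + 1) \<and> xb (k + 1) = xbin k (m k + 1)"
  shows "x k \<in> X \<and> xb k \<in> X"
proof (induction k)
  case 0 show ?case using assms(2,3) by simp
next
  case (Suc k)
  then have "xin k (m k + 1) \<in> X"
    using averaged_iterates_in_convex[of X "xin k" "m k" "xbin k" "m k + 1"] assms(1) init step by simp
  moreover have "xbin k (m k + 1) \<in> X"
    using Suc init step[of "m k" k] by (cases "m k = 0") auto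
  ultimately show ?case using outer by simp
qed

theorem lemma4p1:
  fixes X :: "(real^'n1) set" and A :: "real^'n1^'n" and b :: "real^'n"
    and N :: nat and fs :: "nat \<Rightarrow> real^'n1 \<Rightarrow> real" and gs :: "nat \<Rightarrow> real^'n1 \<Rightarrow> real^'n1"
    and U :: "(real^'n1) set" and H :: "real^'n1^'n1" and nu beta s :: real
    and x xb :: "nat \<Rightarrow> real^'n1" and lam :: "nat \<Rightarrow> real^'n"
    and m :: "nat \<Rightarrow> nat" and eta :: "nat \<Rightarrow> real" and M :: "nat \<Rightarrow> real^'n1^'n1"
    and xi :: "nat \<Rightarrow> nat \<Rightarrow> nat" and e :: "nat \<Rightarrow> nat \<Rightarrow> real^'n1"
    and xin xbin :: "nat \<Rightarrow> nat \<Rightarrow> real^'n1" and k :: nat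
  assumes X: "X \<noteq> {}" "closed X" "convex X"
    and N: "N \<ge> 1"
    and U: "open U" "X \<subseteq> U"
    and fconv: "\<forall>j\<in>{1..N}. convex_on U (fs j)"
    and fdiff: "\<forall>j\<in>{1..N}. \<forall>y\<in>U. (fs j has_derivative (\<lambda>h. gs j y \<bullet> h)) (at y)"
    and fcont: "\<forall>j\<in>{1..N}. continuous_on U (gs j)"
    and Hsym: "transpose H = H" and Hpd: "pos_def H"
    and nu: "nu > 0"
    and Lip: "\<forall>j\<in>{1..N}. \<forall>y1\<in>X. \<forall>y2\<in>X.
                Gnorm (matrix_inv H) (gs j y1 - gs j y2) \<le> nu * Gnorm H (y1 - y2)"
    and beta: "beta > 0" and s: "0 < s" "s \<le> 2"
    and init: "x 0 \<in> X" "xb 0 = x 0"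
    and mpos: "\<forall>k. m k \<ge> 1" and etapos: "\<forall>k. eta k > 0"
    and Msym: "\<forall>k. transpose (M k) = M k"
    and Dpsd: "\<forall>k. psd (M k - beta *\<^sub>R (transpose A ** A))"
    and xi: "\<forall>k t. 1 \<le> t \<and> t \<le> m k \<longrightarrow> xi k t \<in> {1..N}"
    and inner_init: "\<forall>k. xin k 1 = x k \<and> xbin k 1 = xb k"
    and inner_step: "\<forall>k t. 1 \<le> t \<and> t \<le> m k \<longrightarrow>
       (let bt = 2 / (real t + 1);
            gt = 2 / (real t * eta k);
            xh = bt *\<^sub>R xbin k t + (1 - bt) *\<^sub>R xin k t;
            d = gs (xi k t) xh + e k t;
            h = - (transpose A *v (lam k - beta *\<^sub>R (A *v x k - b)));
            Phi = (\<lambda>z. (d + h) \<bullet> z + gt / 2 * qf H (z - xbin k t) + 1 / 2 * qf (M k) (z - x k))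
        in xbin k (t + 1) \<in> X \<and> (\<forall>z\<in>X. Phi (xbin k (t + 1)) \<le> Phi z)
           \<and> xin k (t + 1) = bt *\<^sub>R xbin k (t + 1) + (1 - bt) *\<^sub>R xin k t)"
    and outer: "\<forall>k. x (k + 1) = xin k (m k + 1) \<and> xb (k + 1) = xbin k (m k + 1)
                  \<and> lam (k + 1) = lam k - (s * beta) *\<^sub>R (A *v x (k + 1) - b)"
    and eta_k: "eta k < 1 / nu"
  shows "\<forall>y\<in>X.
    let fb = (\<lambda>z. (1 / real N) * (\<Sum>j=1..N. fs j z));
        gb = (\<lambda>z. (1 / real N) *\<^sub>R (\<Sum>j=1..N. gs j z));
        xh = (\<lambda>t. (2 / (real t + 1)) *\<^sub>R xbin k t + (1 - 2 / (real t + 1)) *\<^sub>R xin k t);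
        delta = (\<lambda>t. gb (xh t) - (gs (xi k t) (xh t) + e k t));
        lt = lam k - beta *\<^sub>R (A *v x (k + 1) - b);
        D = M k - beta *\<^sub>R (transpose A ** A);
        mk = real (m k);
        zeta = 2 / (mk * (mk + 1)) *
          ((1 / eta k) * (qf H (y - xb (k + 1)) - qf H (y - xb k))
           - (\<Sum>t=1..m k. real t * (delta t \<bullet> (xbin k t - y)))
           - eta k / (4 * (1 - eta k * nu)) * (\<Sum>t=1..m k. (real t)^2 * qf (matrix_inv H) (delta t)))
    in fb y - fb (x (k + 1)) + (y - x (k + 1)) \<bullet> (- (transpose A *v lt))
       \<ge> (x (k + 1) - y) \<bullet> (D *v (x (k + 1) - x k)) + zeta"
proof -
  have Mpsd: "psd (M k)"
    using psd_add_gram[OF Dpsd[rule_format, of k], of beta A] beta by simp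
  have step: "\<And>k t. 1 \<le> t \<Longrightarrow> t \<le> m k \<Longrightarrow> xbin k (t + 1) \<in> X \<and>
      xin k (t + 1) = (2 / (real t + 1)) *\<^sub>R xbin k (t + 1) + (1 - 2 / (real t + 1)) *\<^sub>R xin k t"
    using inner_step unfolding Let_def by blast
  have "x k \<in> X \<and> xb k \<in> X"
    using outer_iterates_in_convex[OF X(3) init inner_init step] outer by blast
  have "eta k * nu < 1" using eta_k nu by (simp add: field_simps)
  define h where "h = - (transpose A *v (lam k - beta *\<^sub>R (A *v x k - b)))"
  define fb where "fb = (\<lambda>z. (1 / real N) * (\<Sum>j=1..N. fs j z))"
  define gb where "gb = (\<lambda>z. (1 / real N) *\<^sub>R (\<Sum>j=1..N. gs j z))"
  define xh where "xh = (\<lambda>t. (2 / (real t + 1)) *\<^sub>R xbin k t + (1 - 2 / (real t + 1)) *\<^sub>R xin k t)"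
  define delta where "delta = (\<lambda>t. gb (xh t) - (gs (xi k t) (xh t) + e k t))"
  define lt where "lt = lam k - beta *\<^sub>R (A *v x (k + 1) - b)"
  define D where "D = M k - beta *\<^sub>R (transpose A ** A)"
  define zeta where "zeta = (\<lambda>y. 2 / (real (m k) * (real (m k) + 1)) *
    ((1 / eta k) * (qf H (y - xb (k + 1)) - qf H (y - xb k))
     - (\<Sum>t=1..m k. real t * (delta t \<bullet> (xbin k t - y)))
     - eta k / (4 * (1 - eta k * nu)) * (\<Sum>t=1..m k. (real t)\<^sup>2 * qf (matrix_inv H) (delta t))))"
  interpret prox_inner_loop X H "M k" nu "eta k" fb gb h "x k" "m k"
    "\<lambda>t. gs (xi k t) (xh t) + e k t" "xin k" "xbin k"
  proof
    show "smooth_convex_on X H nu fb gb"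
      using smooth_convex_on_average[of "{1..N}" X H nu fs gs] N
        smooth_convex_onI[OF Hsym Hpd nu X(3) U(2)] fconv fdiff Lip by (simp add: fb_def gb_def)
  qed (use X(3) Hsym Hpd Msym Mpsd nu etapos \<open>eta k * nu < 1\<close> \<open>x k \<in> X \<and> xb k \<in> X\<close>
      inner_init inner_step in \<open>auto simp: h_def xh_def Let_def\<close>)
  have "\<forall>y\<in>X. fb y - fb (x (k + 1)) + (y - x (k + 1)) \<bullet> (- (transpose A *v lt))
     \<ge> (x (k + 1) - y) \<bullet> (D *v (x (k + 1) - x k)) + zeta y"
  proof
    fix y assume "y \<in> X"
    have "\<delta> t = delta t" for t unfolding \<delta>_def q_def delta_def by (simp add: xh_def \<beta>_def)
    moreover have "xbin k 1 = xb k" "xbin k (m k + 1) = xb (k + 1)" "xin k (m k + 1) = x (k + 1)"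
      using inner_init outer by simp_all
    ultimately have "fb y - fb (x (k + 1)) + (y - x (k + 1)) \<bullet> (h + M k *v (x (k + 1) - x k)) \<ge> zeta y"
      using inner_loop_inequality[OF mpos[rule_format] \<open>y \<in> X\<close>] unfolding zeta_def by simp
    then show "fb y - fb (x (k + 1)) + (y - x (k + 1)) \<bullet> (- (transpose A *v lt))
        \<ge> (x (k + 1) - y) \<bullet> (D *v (x (k + 1) - x k)) + zeta y"
      using augmented_lagrangian_multiplier_identity[of y "x (k + 1)" A "lam k" beta b "M k" "x k"]
      unfolding h_def lt_def D_def by linarith
  qed
  then show ?thesis unfolding Let_def fb_def gb_def xh_def delta_def lt_def D_def zeta_def by simp

qed

end
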